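(* Let $p$ be a prime and $m,n$ positive integers. Then $$\tfrac12\big[(m+n)^{2p}+(n\bmod 2)(m+n)^p\big]\equiv\tfrac12\big[m^{2p}+(n\bmod2)m^p\big]\pmod n,$$ i.e., the difference of the two sides is an integer divisible by $n$. *)

theory Defs
  imports Complex_Main "HOL-Computational_Algebra.Primes"
begin

end

theory Submission
  imports Defs "HOL-Number_Theory.Cong"
begin

text \<open>
  Clearing the factor 1/2, the claim is that \<open>2n\<close> divides \<open>F(m + n) - F(m)\<close> for
  \<open>F(x) = x\<^sup>2\<^sup>p + (n mod 2) x\<^sup>p\<close>. For even \<open>n\<close>, \<open>(x + n)\<^sup>2 \<equiv> x\<^sup>2 (mod 2n)\<close> already.
  For odd \<open>n\<close>, \<open>F(m + n) \<equiv> F(m) (mod n)\<close>, and both values are even since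
  \<open>x\<^sup>2\<^sup>p + x\<^sup>p = x\<^sup>p (x\<^sup>p + 1)\<close>; as \<open>2\<close> and \<open>n\<close> are coprime this gives the
  congruence modulo \<open>2n\<close>.
\<close>

lemma even_power_double_add_power:
  fixes x :: "'a::semiring_parity"
  shows "even (x ^ (2 * k) + x ^ k)"
proof -
  have "x ^ (2 * k) + x ^ k = x ^ k * (x ^ k + 1)"
    by (simp add: power_mult power2_eq_square algebra_simps)
  then show ?thesis
    by (cases "even (x ^ k)") auto
qed

lemma square_add_cong_even_modulus:
  fixes x n :: int
  assumes "even n"
  shows "[(x + n) ^ 2 = x ^ 2] (mod 2 * n)"
proof -
  obtain q where "n = 2 * q"
    using assms by blast
  then have "(x + n) ^ 2 = x ^ 2 + (2 * n) * (x + q)"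
    by (simp add: power2_eq_square algebra_simps)
  then show ?thesis
    by (simp add: cong_iff_dvd_diff)
qed

lemma power_double_add_power_cong_odd_modulus:
  fixes x n :: int
  assumes "odd n"
  shows "[(x + n) ^ (2 * k) + (x + n) ^ k = x ^ (2 * k) + x ^ k] (mod 2 * n)"
proof (rule coprime_cong_mult)
  have "[x + n = x] (mod n)"
    by (simp add: cong_iff_dvd_diff)
  then show "[(x + n) ^ (2 * k) + (x + n) ^ k = x ^ (2 * k) + x ^ k] (mod n)"
    by (intro cong_add cong_pow)
  show "[(x + n) ^ (2 * k) + (x + n) ^ k = x ^ (2 * k) + x ^ k] (mod 2)"
    using even_power_double_add_power[of "x + n" k] even_power_double_add_power[of x k]
    by (simp add: cong_iff_dvd_diff)
  show "coprime 2 n"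
    using assms by simp
qed

lemma shift_cong_double_modulus:
  fixes x n :: int
  shows "[(x + n) ^ (2 * k) + (n mod 2) * (x + n) ^ k
          = x ^ (2 * k) + (n mod 2) * x ^ k] (mod 2 * n)"
proof (cases "even n")
  case True
  then have "[((x + n) ^ 2) ^ k = (x ^ 2) ^ k] (mod 2 * n)"
    by (intro cong_pow square_add_cong_even_modulus)
  with True show ?thesis
    by (simp add: power_mult)
next
  case False
  then show ?thesis
    using power_double_add_power_cong_odd_modulus[of n x k] by (simp add: odd_iff_mod_2_eq_one)
qed

theorem lemma4:
  fixes p m n :: nat
  assumes "prime p" and "m > 0" and "n > 0"
  shows "\<exists>k::int.
    (1/2) * ((real m + real n) ^ (2*p) + real (n mod 2) * (real m + real n) ^ p)
    - (1/2) * (real m ^ (2*p) + real (n mod 2) * real m ^ p)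
    = real_of_int k * real n"
proof -
  obtain k where k: "(int m + int n) ^ (2 * p) + int (n mod 2) * (int m + int n) ^ p
      - (int m ^ (2 * p) + int (n mod 2) * int m ^ p) = 2 * int n * k"
    using shift_cong_double_modulus[of "int m" "int n" p]
    by (auto simp: cong_iff_dvd_diff of_nat_mod elim: dvdE)
  then have "(real m + real n) ^ (2 * p) + real (n mod 2) * (real m + real n) ^ p
      - (real m ^ (2 * p) + real (n mod 2) * real m ^ p) = 2 * real n * real_of_int k"
    using arg_cong[OF k, of real_of_int] by simp
  then show ?thesis
    by (intro exI[of _ k]) (simp add: algebra_simps)
qed

end
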